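(* Let $D$ and $E$ be finite sets of cells, where a cell is a pair $(i,j)\in\mathbb{Z}^2$ (row $i$, column $j$), and let $f:D\to E$ be a picture. For $A\in D$ define $r(A)=\mathrm{row}(A)-\mathrm{row}(f(A))$, and for $T\in E$ define $r'(T)=r(f^{-1}(T))=\mathrm{row}(f^{-1}(T))-\mathrm{row}(T)$. Then: (a) if $A,B\in D$ lie in the same row with $B$ to the left of $A$, then $r(B)\le r(A)$; (b) if $A,B\in D$ lie in the same column with $A=(i,j)$ and $B=(i+1,j)$, then $r(B)\le r(A)$; (c) if $T,T'\in E$ lie in the same row with $T'$ to the left of $T$, then $r'(T)\le r'(T')$; (d) if $T,T'\in E$ lie in the same column with $T=(i,j)$ and $T'=(i+1,j)$, then $r'(T)\le r'(T')$.
   Context: Rows are numbered from top to bottom and columns from left to right, so the cell $(i,j)$ is weakly above and weakly right of $(i',j')$ iff $i\le i'$ and $j\ge j'$; "to the left" means smaller column index. Lexicographic order on cells: $(i,j)$ precedes $(i',j')$ if $i<i'$, or $i=i'$ and $j<j'$. A picture between finite sets of cells $D$ and $E$ is a bijection $f:D\to E$ such that (1) for distinct $A,B\in D$ with $A$ weakly above and weakly right of $B$, $f(A)$ precedes $f(B)$ lexicographically, and (2) for distinct $A',B'\in E$ with $A'$ weakly above and weakly right of $B'$, $f^{-1}(A')$ precedes $f^{-1}(B')$ lexicographically. *)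

theory Defs
  imports Main
begin

type_synonym cell = "int \<times> int"

definition row :: "cell \<Rightarrow> int" where "row A = fst A"
definition col :: "cell \<Rightarrow> int" where "col A = snd A"

definition weakly_NE :: "cell \<Rightarrow> cell \<Rightarrow> bool" where
  "weakly_NE A B \<longleftrightarrow> row A \<le> row B \<and> col A \<ge> col B"

definition lex_prec :: "cell \<Rightarrow> cell \<Rightarrow> bool" where
  "lex_prec A B \<longleftrightarrow> row A < row B \<or> (row A = row B \<and> col A < col B)"

definition picture :: "(cell \<Rightarrow> cell) \<Rightarrow> cell set \<Rightarrow> cell set \<Rightarrow> bool" where
  "picture f D E \<longleftrightarrow> bij_betw f D E
     \<and> (\<forall>A\<in>D. \<forall>B\<in>D. A \<noteq> B \<and> weakly_NE A B \<longrightarrow> lex_prec (f A) (f B))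
     \<and> (\<forall>A'\<in>E. \<forall>B'\<in>E. A' \<noteq> B' \<and> weakly_NE A' B' \<longrightarrow>
            lex_prec (inv_into D f A') (inv_into D f B'))"

definition rdiff :: "(cell \<Rightarrow> cell) \<Rightarrow> cell \<Rightarrow> int" where
  "rdiff f A = row A - row (f A)"

definition rdiff' :: "(cell \<Rightarrow> cell) \<Rightarrow> cell set \<Rightarrow> cell \<Rightarrow> int" where
  "rdiff' f D T = rdiff f (inv_into D f T)"

end

theory Submission
  imports Defs
begin

text \<open>Parts (a) and (b) use only the first picture condition: the images of a cell and of a cell
  weakly south-west of it appear in lexicographic order, which bounds their rows. For (b) the
  second condition additionally rules out that the two images share a row. Parts (c) and (d) are
  (a) and (b) for the inverse bijection, which is again a picture, since
  \<open>r'(T) = - r(f\<^sup>-\<^sup>1)(T)\<close>.\<close>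

lemma picture_lex_prec_image:
  assumes "picture f D E" "A \<in> D" "B \<in> D" "A \<noteq> B" "weakly_NE A B"
  shows "lex_prec (f A) (f B)"
  using assms unfolding picture_def by blast

lemma picture_inv_into:
  assumes "picture f D E"
  shows "picture (inv_into D f) E D"
proof -
  have bij: "bij_betw f D E"
    using assms unfolding picture_def by blast
  have "lex_prec (inv_into E (inv_into D f) A) (inv_into E (inv_into D f) B)"
    if "A \<in> D" "B \<in> D" "A \<noteq> B" "weakly_NE A B" for A B
    using picture_lex_prec_image[OF assms that] bij that
    by (simp add: inv_into_inv_into_eq)
  then show ?thesis
    using assms bij_betw_inv_into[OF bij] unfolding picture_def by blast
qed

lemma picture_rdiff_mono_row:
  assumes "picture f D E" "A \<in> D" "B \<in> D" "row A = row B" "col B < col A"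
  shows "rdiff f B \<le> rdiff f A"
proof -
  have "lex_prec (f A) (f B)"
    using assms by (intro picture_lex_prec_image) (auto simp: weakly_NE_def)
  then show ?thesis
    using assms(4) unfolding lex_prec_def rdiff_def by linarith
qed

lemma picture_rdiff_mono_col:
  assumes pic: "picture f D E" and "(i, j) \<in> D" "(i + 1, j) \<in> D"
  shows "rdiff f (i + 1, j) \<le> rdiff f (i, j)"
proof -
  define A B where "A = (i, j)" and "B = (i + 1, j)"
  have A: "A \<in> D" "row A = i" "col A = j" and B: "B \<in> D" "row B = i + 1" "col B = j"
    using assms by (simp_all add: A_def B_def row_def col_def)
  have bij: "bij_betw f D E"
    using pic unfolding picture_def by blast
  have AB: "lex_prec (f A) (f B)"
    using A B by (intro picture_lex_prec_image[OF pic]) (auto simp: weakly_NE_def)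
  have "row (f A) \<noteq> row (f B)"
  proof
    assume same_row: "row (f A) = row (f B)"
    with AB have "col (f A) < col (f B)"
      by (simp add: lex_prec_def)
    then have "lex_prec (inv_into D f (f B)) (inv_into D f (f A))"
      using A B same_row
      by (intro picture_lex_prec_image[OF picture_inv_into[OF pic]])
        (auto simp: weakly_NE_def bij_betw_apply[OF bij])
    then have "lex_prec B A"
      using A B bij by (simp add: bij_betw_imp_inj_on)
    then show False
      using A B by (simp add: lex_prec_def)
  qed
  with AB show ?thesis
    using A B unfolding A_def B_def lex_prec_def rdiff_def by linarith
qed

lemma rdiff'_eq_uminus_rdiff_inv_into:
  assumes "T \<in> f ` D"
  shows "rdiff' f D T = - rdiff (inv_into D f) T"
  using assms by (simp add: rdiff'_def rdiff_def f_inv_into_f)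

theorem lemma3p3:
  fixes D E :: "cell set" and f :: "cell \<Rightarrow> cell"
  assumes "finite D" and "finite E" and "picture f D E"
  shows "(\<forall>A\<in>D. \<forall>B\<in>D. row A = row B \<and> col B < col A \<longrightarrow> rdiff f B \<le> rdiff f A)
    \<and> (\<forall>i j. (i, j) \<in> D \<and> (i + 1, j) \<in> D \<longrightarrow> rdiff f (i + 1, j) \<le> rdiff f (i, j))
    \<and> (\<forall>T\<in>E. \<forall>T'\<in>E. row T = row T' \<and> col T' < col T \<longrightarrow> rdiff' f D T \<le> rdiff' f D T')
    \<and> (\<forall>i j. (i, j) \<in> E \<and> (i + 1, j) \<in> E \<longrightarrow> rdiff' f D (i, j) \<le> rdiff' f D (i + 1, j))"
proof -
  have pic_inv: "picture (inv_into D f) E D"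
    using assms(3) by (rule picture_inv_into)
  have E: "E = f ` D"
    using assms(3) unfolding picture_def by (simp add: bij_betw_def)
  show ?thesis
    using picture_rdiff_mono_row[OF assms(3)] picture_rdiff_mono_col[OF assms(3)]
      picture_rdiff_mono_row[OF pic_inv] picture_rdiff_mono_col[OF pic_inv]
    by (auto simp: E rdiff'_eq_uminus_rdiff_inv_into)
qed

end
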